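(* For a metrizable topological group $G$, $G$ is NSS if and only if $G$ is STAP.
   Context: A topological group $G$ with neutral element $e$ is NSS if some neighborhood of $e$ contains no nontrivial subgroup of $G$. A sequence $(g_n)$ in $G$ is hyper-converging if $g_n^{m_n}\to e$ for every integer sequence $(m_n)$. $G$ is STAP if no sequence of pairwise distinct elements of $G$ is hyper-converging. *)

theory Defs
  imports "HOL-Algebra.Group" "HOL-Analysis.Analysis"
begin

definition topological_group :: "('a, 'b) monoid_scheme \<Rightarrow> 'a topology \<Rightarrow> bool" where
  "topological_group G X \<longleftrightarrow>
     group G \<and> topspace X = carrier G \<and>
     continuous_map (prod_topology X X) X (\<lambda>p. fst p \<otimes>\<^bsub>G\<^esub> snd p) \<and>
     continuous_map X X (\<lambda>x. inv\<^bsub>G\<^esub> x)"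

definition NSS :: "('a, 'b) monoid_scheme \<Rightarrow> 'a topology \<Rightarrow> bool" where
  "NSS G X \<longleftrightarrow>
     (\<exists>N. (\<exists>U. openin X U \<and> \<one>\<^bsub>G\<^esub> \<in> U \<and> U \<subseteq> N) \<and>
          (\<forall>H. subgroup H G \<and> H \<subseteq> N \<longrightarrow> H = {\<one>\<^bsub>G\<^esub>}))"

definition hyper_converging :: "('a, 'b) monoid_scheme \<Rightarrow> 'a topology \<Rightarrow> (nat \<Rightarrow> 'a) \<Rightarrow> bool" where
  "hyper_converging G X g \<longleftrightarrow>
     (\<forall>n. g n \<in> carrier G) \<and>
     (\<forall>m :: nat \<Rightarrow> int. limitin X (\<lambda>n. g n [^]\<^bsub>G\<^esub> m n) \<one>\<^bsub>G\<^esub> sequentially)"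

definition STAP :: "('a, 'b) monoid_scheme \<Rightarrow> 'a topology \<Rightarrow> bool" where
  "STAP G X \<longleftrightarrow> \<not> (\<exists>g. inj g \<and> hyper_converging G X g)"

end

theory Submission
  imports Defs "HOL-Algebra.Elementary_Groups"
begin

(* NSS => STAP: let U be an open neighbourhood of the identity containing no nontrivial
   subgroup.  For a hyper-converging sequence g we choose, for each n, an exponent m n
   with g n [^] m n outside U whenever such an exponent exists; convergence of
   g n [^] m n forces the whole cyclic subgroup generated by g n into U for large n,
   hence g n = 1 eventually, and g cannot be injective.
   STAP => NSS (metrizable case): if G is not NSS, every ball around the identity
   contains a nontrivial element all of whose powers stay in that ball.  A general
   metric-space lemma turns such "arbitrarily small witnesses" into an injective
   sequence whose n-th term lies in the witness set for radius 1/(n+1); its powers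
   then converge to the identity uniformly in the exponent, so it is hyper-converging. *)

text \<open>Injectivity comes from making the distances to a
  strictly decrease.\<close>
lemma (in Metric_space) injective_sequence_of_small_witnesses:
  fixes A :: "real \<Rightarrow> 'a set"
  assumes witness: "\<And>r. r > 0 \<Longrightarrow> \<exists>x \<in> A r. x \<noteq> a"
    and in_ball: "\<And>r. A r \<subseteq> mball a r"
    and mono: "\<And>r s. r \<le> s \<Longrightarrow> A r \<subseteq> A s"
  shows "\<exists>g. inj g \<and> (\<forall>n. g n \<in> A (inverse (real n + 1)))"
proof -
  define pick where "pick r = (SOME x. x \<in> A r \<and> x \<noteq> a)" for r
  have pick: "pick r \<in> A r" "pick r \<noteq> a" if "r > 0" for r
    using someI_ex[OF witness[OF that, unfolded Bex_def]] unfolding pick_def by auto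
  define rad where "rad n x = min (inverse (real n + 2)) (d x a)" for n x
  define g where "g = rec_nat (pick 1) (\<lambda>n x. pick (rad n x))"
  have g0: "g 0 = pick 1" and gSuc: "g (Suc n) = pick (rad n (g n))" for n
    unfolding g_def by simp_all
  have rad_pos: "rad n x > 0" if "x \<in> A r" "x \<noteq> a" for n x r
    using that in_ball[of r] unfolding rad_def by (auto intro: mdist_pos_less)
  have good: "g n \<in> A (inverse (real n + 1)) \<and> g n \<noteq> a" for n
  proof (induction n)
    case 0
    show ?case using pick[of 1] g0 by simp
  next
    case (Suc n)
    then have pos: "rad n (g n) > 0" using rad_pos by blast
    have "A (rad n (g n)) \<subseteq> A (inverse (real (Suc n) + 1))"
      by (rule mono) (simp add: rad_def add.commute)
    then show ?case using pick[OF pos] unfolding gSuc by blast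
  qed
  have closer: "d (g (Suc n)) a < d (g n) a" for n
  proof -
    have pos: "rad n (g n) > 0" using good rad_pos by blast
    have "g (Suc n) \<in> mball a (rad n (g n))"
      using pick(1)[OF pos] in_ball unfolding gSuc by blast
    then show ?thesis unfolding rad_def by (simp add: commute)
  qed
  have "strict_mono (\<lambda>n. - d (g n) a)"
    by (rule strict_monoI_Suc) (use closer in auto)
  then have "inj g"
    by (metis (mono_tags, lifting) injI neq_iff strict_mono_less)
  then show ?thesis using good by blast
qed

lemma (in Metric_space) limitin_if_in_shrinking_balls:
  assumes "a \<in> M" and in_ball: "\<And>n. x n \<in> mball a (inverse (real n + 1))"
  shows "limitin mtopology x a sequentially"
  unfolding limitin_metric
proof (intro conjI allI impI)
  fix e :: real
  assume "e > 0"
  then obtain N where N: "inverse (real N + 1) < e"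
    by (metis reals_Archimedean add.commute of_nat_Suc)
  have "x n \<in> M \<and> d (x n) a < e" if "N \<le> n" for n
  proof -
    have "inverse (real n + 1) \<le> inverse (real N + 1)"
      using that by (simp add: le_imp_inverse_le)
    moreover have "x n \<in> M" "d (x n) a < inverse (real n + 1)"
      using in_ball[of n] by (auto simp: commute)
    ultimately show ?thesis using N by linarith
  qed
  then show "eventually (\<lambda>n. x n \<in> M \<and> d (x n) a < e) sequentially"
    unfolding eventually_sequentially by blast
qed (use assms in auto)

text \<open>Every neighbourhood U of the identity eventually contains the whole cyclic subgroup
  generated by a hyper-converging sequence: otherwise choose, for each n, an exponent
  pushing g n out of U, contradicting convergence of the corresponding powers.\<close>
lemma hyper_converging_powers_eventually_in:
  fixes G (structure)
  assumes hc: "hyper_converging G X g" and U: "openin X U" "\<one> \<in> U"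
  shows "eventually (\<lambda>n. \<forall>k::int. g n [^] k \<in> U) sequentially"
proof -
  define m where
    "m n = (if \<exists>k::int. g n [^] k \<notin> U then SOME k::int. g n [^] k \<notin> U else 0)" for n
  have "limitin X (\<lambda>n. g n [^] m n) \<one> sequentially"
    using hc unfolding hyper_converging_def by blast
  then have "eventually (\<lambda>n. g n [^] m n \<in> U) sequentially"
    using U unfolding limitin_def by blast
  moreover have "\<forall>k::int. g n [^] k \<in> U" if in_U: "g n [^] m n \<in> U" for n
  proof (rule ccontr)
    assume "\<not> (\<forall>k::int. g n [^] k \<in> U)"
    then have escape: "\<exists>k::int. g n [^] k \<notin> U" by blast
    then have "g n [^] m n \<notin> U" unfolding m_def using someI_ex[OF escape] by simp
    with in_U show False by blast
  qed
  ultimately show ?thesis by (rule eventually_mono)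
qed

lemma NSS_cyclic_subgroups_trivial:
  fixes G (structure)
  assumes "group G" and "NSS G X"
  obtains U where "openin X U" "\<one> \<in> U"
    "\<And>x. x \<in> carrier G \<Longrightarrow> \<forall>k::int. x [^] k \<in> U \<Longrightarrow> x = \<one>"
proof -
  interpret group G by fact
  obtain N U where U: "openin X U" "\<one> \<in> U" "U \<subseteq> N"
    and trivial: "\<And>H. subgroup H G \<Longrightarrow> H \<subseteq> N \<Longrightarrow> H = {\<one>}"
    using \<open>NSS G X\<close> unfolding NSS_def by blast
  have cyclic_trivial: "x = \<one>"
    if x: "x \<in> carrier G" and powers: "\<forall>k::int. x [^] k \<in> U" for x
  proof -
    have "range (\<lambda>k::int. x [^] k) \<subseteq> N" using powers U(3) by blast
    then have "range (\<lambda>k::int. x [^] k) = {\<one>}"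
      using trivial[OF subgroup_of_powers[OF x]] by blast
    then have "x [^] (1::int) = \<one>" by blast
    then show ?thesis using x by simp
  qed
  from U(1,2) cyclic_trivial show ?thesis by (rule that)
qed

lemma (in Metric_space) not_NSS_small_cyclic_subgroup:
  fixes G (structure)
  assumes "group G" and "M = carrier G" and "\<not> NSS G mtopology" and "r > 0"
  shows "\<exists>x \<in> carrier G. x \<noteq> \<one> \<and> (\<forall>k::int. x [^] k \<in> mball \<one> r)"
proof -
  interpret group G by fact
  have "\<one> \<in> M" using \<open>M = carrier G\<close> by simp
  then have "openin mtopology (mball \<one> r)" "\<one> \<in> mball \<one> r"
    using \<open>r > 0\<close> by auto
  then obtain H where H: "subgroup H G" "H \<subseteq> mball \<one> r" "H \<noteq> {\<one>}"
    using \<open>\<not> NSS G mtopology\<close> unfolding NSS_def by blast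
  then obtain x where "x \<in> H" "x \<noteq> \<one>"
    using subgroup.one_closed[OF H(1)] by blast
  then show ?thesis
    using H subgroup_int_pow_closed[OF H(1)] subgroup.mem_carrier[OF H(1)] by blast
qed

lemma NSS_imp_STAP:
  fixes G (structure)
  assumes "group G" and "NSS G X"
  shows "STAP G X"
  unfolding STAP_def
proof
  assume "\<exists>g. inj g \<and> hyper_converging G X g"
  then obtain g where inj: "inj g" and hc: "hyper_converging G X g" by blast
  obtain U where U: "openin X U" "\<one> \<in> U"
    and trivial: "\<And>x. x \<in> carrier G \<Longrightarrow> \<forall>k::int. x [^] k \<in> U \<Longrightarrow> x = \<one>"
    using NSS_cyclic_subgroups_trivial[OF assms] by blast
  have "eventually (\<lambda>n. g n = \<one>) sequentially"
    using hyper_converging_powers_eventually_in[OF hc U] hc trivial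
    unfolding hyper_converging_def by (auto elim: eventually_mono)
  then obtain N where "\<And>n. n \<ge> N \<Longrightarrow> g n = \<one>"
    unfolding eventually_sequentially by blast
  then have "g N = g (Suc N)" by simp
  with inj show False by (simp add: inj_eq)
qed

lemma STAP_imp_NSS:
  fixes G (structure)
  assumes "group G" and "topspace X = carrier G" and "metrizable_space X" and "STAP G X"
  shows "NSS G X"
proof (rule ccontr)
  interpret group G by fact
  assume not_NSS: "\<not> NSS G X"
  obtain M d where "Metric_space M d" and X: "X = Metric_space.mtopology M d"
    using \<open>metrizable_space X\<close> unfolding metrizable_space_def by blast
  interpret Metric_space M d by fact
  have M: "M = carrier G" using \<open>topspace X = carrier G\<close> X by simp
  define A where "A r = {x \<in> carrier G. \<forall>k::int. x [^] k \<in> mball \<one> r}" for r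
  have "A r \<subseteq> mball \<one> r" for r
    unfolding A_def by (metis (mono_tags, lifting) int_pow_1 mem_Collect_eq subsetI)
  moreover have "A r \<subseteq> A s" if "r \<le> s" for r s
    using mball_subset_concentric[OF that] unfolding A_def by blast
  moreover have "\<exists>x \<in> A r. x \<noteq> \<one>" if "r > 0" for r
    using not_NSS_small_cyclic_subgroup[OF \<open>group G\<close> M _ that] not_NSS X
    unfolding A_def by auto
  ultimately obtain g where inj: "inj g" and g: "\<And>n. g n \<in> A (inverse (real n + 1))"
    using injective_sequence_of_small_witnesses by blast
  have "hyper_converging G X g"
    unfolding hyper_converging_def
  proof (intro conjI allI)
    fix n
    show "g n \<in> carrier G" using g unfolding A_def by blast
  next
    fix m :: "nat \<Rightarrow> int"
    have "\<one> \<in> M" using M by simp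
    moreover have "g n [^] m n \<in> mball \<one> (inverse (real n + 1))" for n
      using g unfolding A_def by blast
    ultimately show "limitin X (\<lambda>n. g n [^] m n) \<one> sequentially"
      unfolding X by (rule limitin_if_in_shrinking_balls)
  qed
  with inj \<open>STAP G X\<close> show False unfolding STAP_def by blast
qed

theorem theorem5p3:
  fixes G :: "('a, 'b) monoid_scheme" and X :: "'a topology"
  assumes "topological_group G X" and "metrizable_space X"
  shows "NSS G X \<longleftrightarrow> STAP G X"
  using assms NSS_imp_STAP STAP_imp_NSS unfolding topological_group_def by blast

end
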